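(* Let $m\ge3$ be odd and let $\bm d=(d_1,d_2,d_3)\in\mathcal{S}_1^3$, i.e. each $d_i$ is odd and squarefree. Then $\theta(O^+(X^{\bm d}_2))=\mathbb{Z}_2(\mathbb{Q}_2^\times)^2$, where $\mathbb{Z}_2(\mathbb{Q}_2^\times)^2$ denotes the set $\{as^2: a\in\mathbb{Z}_2\setminus\{0\},\ s\in\mathbb{Q}_2^\times\}$.
   Context: $V$ is the positive definite ternary quadratic space over $\mathbb{Q}$ with basis $e_1,e_2,e_3$ and bilinear form $B(e_i,e_j)=4(m-2)^2\delta_{ij}$, $Q(x)=B(x,x)$. For $\bm d\in\mathbb{N}^3$, $L^{\bm d}=\mathbb{Z}d_1e_1+\mathbb{Z}d_2e_2+\mathbb{Z}d_3e_3$, $\nu=\frac{4-m}{2(m-2)}(e_1+e_2+e_3)$ and $X^{\bm d}=L^{\bm d}+\nu$. $V_2=V\otimes\mathbb{Q}_2$, $X^{\bm d}_2=L^{\bm d}\otimes\mathbb{Z}_2+\nu$, $O^+(X^{\bm d}_2)=\{\sigma\in O^+(V_2):\sigma(X^{\bm d}_2)=X^{\bm d}_2\}$, and $\theta$ is the spinor norm $O^+(V_2)\to\mathbb{Q}_2^\times/(\mathbb{Q}_2^\times)^2$, with $\theta(O^+(X^{\bm d}_2))$ identified with its preimage in $\mathbb{Q}_2^\times$. *)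

theory Defs
  imports "HOL-Analysis.Analysis" "HOL-Computational_Algebra.Squarefree"
begin

text \<open>We characterise Q_2 as a field of characteristic 0
  carrying a discrete valuation v (v x is only meaningful for x nonzero) such that
  v 2 = 1 (2 is a uniformiser), the residue field is F_2, and the field is complete.
  Every such field is isomorphic to Q_2 (every element is a convergent 2-adic expansion),
  and Q_2 with the 2-adic valuation is such a field.\<close>

definition vclose :: "('k::field \<Rightarrow> int) \<Rightarrow> int \<Rightarrow> 'k \<Rightarrow> 'k \<Rightarrow> bool" where
  "vclose v n x y \<longleftrightarrow> x = y \<or> v (x - y) \<ge> n"

definition Q2_model :: "('k::field_char_0 \<Rightarrow> int) \<Rightarrow> bool" where
  "Q2_model v \<longleftrightarrow>
     (\<forall>x y. x \<noteq> 0 \<longrightarrow> y \<noteq> 0 \<longrightarrow> v (x * y) = v x + v y) \<and>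
     (\<forall>x y. x \<noteq> 0 \<longrightarrow> y \<noteq> 0 \<longrightarrow> x + y \<noteq> 0 \<longrightarrow> v (x + y) \<ge> min (v x) (v y)) \<and>
     v 2 = 1 \<and>
     (\<forall>x. x \<noteq> 0 \<longrightarrow> v x \<ge> 0 \<longrightarrow> vclose v 1 x 0 \<or> vclose v 1 x 1) \<and>
     (\<forall>f :: nat \<Rightarrow> 'k.
        (\<forall>n. \<exists>N. \<forall>i\<ge>N. \<forall>j\<ge>N. vclose v n (f i) (f j)) \<longrightarrow>
        (\<exists>L. \<forall>n. \<exists>N. \<forall>i\<ge>N. vclose v n (f i) L))"

definition Z2 :: "('k::field_char_0 \<Rightarrow> int) \<Rightarrow> 'k set" where
  "Z2 v = {a. a = 0 \<or> v a \<ge> 0}"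

text \<open>Vectors are coordinate vectors w.r.t. e_1,e_2,e_3; B(e_i,e_j) = 4(m-2)^2 delta_ij.\<close>

definition Bm :: "nat \<Rightarrow> 'k::field_char_0 ^ 3 \<Rightarrow> 'k ^ 3 \<Rightarrow> 'k" where
  "Bm m x y = 4 * (of_nat m - 2)^2 * (\<Sum>i\<in>UNIV. x $ i * y $ i)"

definition Qm :: "nat \<Rightarrow> 'k::field_char_0 ^ 3 \<Rightarrow> 'k" where
  "Qm m x = Bm m x x"

text \<open>Matrix of the reflection tau_v(x) = x - (2 B(x,v)/Q(v)) v (for Q(v) nonzero).\<close>
definition refl_mat :: "nat \<Rightarrow> 'k::field_char_0 ^ 3 \<Rightarrow> 'k ^ 3 ^ 3" where
  "refl_mat m u = (\<chi> i j. (if i = j then 1 else 0) - 2 * Bm m (axis j 1) u / Qm m u * u $ i)"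

definition Oplus :: "nat \<Rightarrow> ('k::field_char_0 ^ 3 ^ 3) set" where
  "Oplus m = {A. (\<forall>x y. Bm m (A *v x) (A *v y) = Bm m x y) \<and> det A = 1}"

definition nu :: "nat \<Rightarrow> 'k::field_char_0 ^ 3" where
  "nu m = (\<chi> i. (4 - of_nat m) / (2 * (of_nat m - 2)))"

definition X2 :: "('k::field_char_0 \<Rightarrow> int) \<Rightarrow> nat \<Rightarrow> (3 \<Rightarrow> nat) \<Rightarrow> ('k ^ 3) set" where
  "X2 v m d = {x. \<exists>a. (\<forall>i. a i \<in> Z2 v) \<and> x = (\<chi> i. of_nat (d i) * a i) + nu m}"

definition Oplus_X :: "('k::field_char_0 \<Rightarrow> int) \<Rightarrow> nat \<Rightarrow> (3 \<Rightarrow> nat) \<Rightarrow> ('k ^ 3 ^ 3) set" where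
  "Oplus_X v m d = {A \<in> Oplus m. (\<lambda>x. A *v x) ` X2 v m d = X2 v m d}"

text \<open>theta(sigma) = Q(v_1)...Q(v_r) (Q_2^*)^2 whenever sigma = tau_{v_1} ... tau_{v_r}
  with anisotropic v_i. The preimage in Q_2^* of theta(S) for a set S of rotations is
  therefore the following set.\<close>
definition spinor_norm_preimage :: "nat \<Rightarrow> ('k::field_char_0 ^ 3 ^ 3) set \<Rightarrow> 'k set" where
  "spinor_norm_preimage m S =
     {q. \<exists>A\<in>S. \<exists>us :: ('k ^ 3) list. \<exists>s.
           (\<forall>u\<in>set us. Qm m u \<noteq> 0) \<and>
           A = foldr (\<lambda>u M. refl_mat m u ** M) us (mat 1) \<and>
           s \<noteq> 0 \<and> q = (\<Prod>u\<leftarrow>us. Qm m u) * s^2}"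

definition squarefree_odd :: "nat \<Rightarrow> bool" where
  "squarefree_odd n \<longleftrightarrow> odd n \<and> squarefree n"

end

theory Submission
  imports Defs
begin

text \<open>Both sides equal \<open>\<rat>\<^sub>2\<^sup>\<times>\<close>. By Hensel's lemma every 2-adic unit congruent to 1 mod 8
  is a square, so \<open>\<rat>\<^sub>2\<^sup>\<times>/(\<rat>\<^sub>2\<^sup>\<times>)\<^sup>2\<close> is represented by 1, 2, 3, 5, 6, 7, 10, 14.
  The reflection in an integral vector \<open>u\<close> with \<open>|u|\<^sup>2\<close> not divisible by 4 maps \<open>X\<^sub>2\<close> to itself:
  since all \<open>d\<^sub>i\<close> are odd, \<open>X\<^sub>2 = \<nu> + \<int>\<^sub>2\<^sup>3\<close>, the coordinates of \<open>\<nu>\<close> are equal with \<open>2\<nu> \<in> \<int>\<^sub>2\<^sup>3\<close>, and the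
  denominator \<open>|u|\<^sup>2\<close> is cancelled by the factor 2 of the reflection, together with the even coordinate
  sum of \<open>u\<close> when \<open>|u|\<^sup>2 \<equiv> 2 (mod 4)\<close>. A product of two such reflections is a rotation of \<open>X\<^sub>2\<close>
  with spinor norm \<open>|u|\<^sup>2 |w|\<^sup>2\<close>, and suitable pairs realise every representative
  (\<open>7 \<cdot> 3\<^sup>2 = 21 \<cdot> 3\<close> for the class of 7).\<close>

locale Q2_valuation =
  fixes v :: "'k::field_char_0 \<Rightarrow> int"
  assumes Q2_model: "Q2_model v"
begin

lemma v_mult: "x \<noteq> 0 \<Longrightarrow> y \<noteq> 0 \<Longrightarrow> v (x * y) = v x + v y"
  using Q2_model unfolding Q2_model_def by blast

lemma v_add: "x \<noteq> 0 \<Longrightarrow> y \<noteq> 0 \<Longrightarrow> x + y \<noteq> 0 \<Longrightarrow> v (x + y) \<ge> min (v x) (v y)"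
  using Q2_model unfolding Q2_model_def by blast

lemma v_two: "v 2 = 1"
  using Q2_model unfolding Q2_model_def by blast

lemma v_residue: "x \<noteq> 0 \<Longrightarrow> v x \<ge> 0 \<Longrightarrow> vclose v 1 x 0 \<or> vclose v 1 x 1"
  using Q2_model unfolding Q2_model_def by blast

lemma v_complete:
  fixes f :: "nat \<Rightarrow> 'k"
  assumes "\<forall>n. \<exists>N. \<forall>i\<ge>N. \<forall>j\<ge>N. vclose v n (f i) (f j)"
  shows "\<exists>L. \<forall>n. \<exists>N. \<forall>i\<ge>N. vclose v n (f i) L"
  using Q2_model assms unfolding Q2_model_def by blast

lemma v_one: "v 1 = 0"
  using v_mult[of 1 1] by simp

lemma v_inverse: "x \<noteq> 0 \<Longrightarrow> v (inverse x) = - v x"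
  using v_mult[of x "inverse x"] v_one by simp

lemma v_divide: "x \<noteq> 0 \<Longrightarrow> y \<noteq> 0 \<Longrightarrow> v (x / y) = v x - v y"
  using v_mult[of x "inverse y"] v_inverse[of y] by (simp add: divide_inverse)

lemma v_minus_one: "v (-1) = 0"
  using v_mult[of "-1" "-1"] v_one by simp

lemma v_minus: "v (- x) = v x"
  using v_mult[of "-1" x] v_minus_one by (cases "x = 0") simp_all

lemma v_diff_commute: "v (x - y) = v (y - x)"
  using v_minus[of "x - y"] by simp

lemma v_two_power: "v (2 ^ n) = int n"
  by (induction n) (simp_all add: v_one v_mult v_two)

lemma v_add_strict:
  assumes "x \<noteq> 0" "y \<noteq> 0" "v x < v y"
  shows "x + y \<noteq> 0" "v (x + y) = v x"
proof -
  show xy: "x + y \<noteq> 0"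
  proof
    assume "x + y = 0"
    then have "y = - x" by (simp add: eq_neg_iff_add_eq_0 add.commute)
    then show False using assms v_minus by simp
  qed
  have "v (x + y) \<ge> v x" using v_add[OF assms(1,2) xy] assms(3) by simp
  moreover have "v x \<ge> min (v (x + y)) (v (- y))"
    using v_add[OF xy, of "- y"] assms by simp
  ultimately show "v (x + y) = v x" using assms(3) v_minus by (auto simp: min_def split: if_splits)
qed

lemma v_of_nat_nonneg: "n > 0 \<Longrightarrow> v (of_nat n) \<ge> 0"
proof (induction n)
  case (Suc n)
  show ?case
  proof (cases "n = 0")
    case False
    have "(of_nat n + 1 :: 'k) \<noteq> 0" using of_nat_neq_0[of n] by (simp add: add.commute)
    then have "v (of_nat n + 1) \<ge> min (v (of_nat n)) (v 1)" using False by (intro v_add) auto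
    then show ?thesis using Suc False v_one by (simp add: add.commute)
  qed (simp add: v_one)
qed simp

lemma v_of_int_nonneg:
  assumes "n \<noteq> 0"
  shows "v (of_int n) \<ge> 0"
proof (cases "n \<ge> 0")
  case True
  then show ?thesis using v_of_nat_nonneg[of "nat n"] assms by simp
next
  case False
  then have "(of_int n :: 'k) = - of_nat (nat (- n))" by simp
  then show ?thesis using v_of_nat_nonneg[of "nat (- n)"] False v_minus by simp
qed

lemma v_of_int_odd:
  assumes "odd n"
  shows "v (of_int n) = 0"
proof -
  obtain k where k: "n = 2 * k + 1" using assms by (rule oddE)
  show ?thesis
  proof (cases "k = 0")
    case False
    have "v (of_int (2 * k) :: 'k) = 1 + v (of_int k)" using False v_mult[of 2 "of_int k"] v_two by simp
    then have "v (1 :: 'k) < v (of_int (2 * k))" using v_of_int_nonneg[OF False] v_one by simp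
    then have "v (1 + of_int (2 * k) :: 'k) = v 1" using False by (intro v_add_strict(2)) auto
    then show ?thesis using k v_one by (simp add: add.commute)
  qed (simp add: k v_one)
qed

lemma Z2_add: "x \<in> Z2 v \<Longrightarrow> y \<in> Z2 v \<Longrightarrow> x + y \<in> Z2 v"
  unfolding Z2_def using v_add[of x y] by fastforce

lemma Z2_mult: "x \<in> Z2 v \<Longrightarrow> y \<in> Z2 v \<Longrightarrow> x * y \<in> Z2 v"
  unfolding Z2_def using v_mult[of x y] by fastforce

lemma Z2_uminus: "x \<in> Z2 v \<Longrightarrow> - x \<in> Z2 v"
  unfolding Z2_def using v_minus[of x] by auto

lemma Z2_diff: "x \<in> Z2 v \<Longrightarrow> y \<in> Z2 v \<Longrightarrow> x - y \<in> Z2 v"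
  using Z2_add[of x "- y"] Z2_uminus[of y] by simp

lemma Z2_of_int: "of_int n \<in> Z2 v"
  unfolding Z2_def using v_of_int_nonneg[of n] by auto

lemma Z2_of_nat: "of_nat n \<in> Z2 v"
  using Z2_of_int[of "int n"] by simp

lemma Z2_divide_odd:
  assumes "odd b" "x \<in> Z2 v"
  shows "x / of_int b \<in> Z2 v"
proof (cases "x = 0")
  case False
  have "b \<noteq> 0" using assms(1) by auto
  then have "v (x / of_int b) = v x"
    using v_divide[of x "of_int b"] v_of_int_odd[OF assms(1)] False by simp
  then show ?thesis using assms(2) by (auto simp: Z2_def)
qed (simp add: Z2_def)

lemma Z2_of_int_divide:
  assumes "odd p" "b \<noteq> 0" "b dvd a * p"
  shows "of_int a / of_int b \<in> Z2 v"
proof -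
  obtain k where k: "a * p = b * k" using assms(3) by blast
  have "p \<noteq> 0" using assms(1) by auto
  have "(of_int a * of_int p :: 'k) = of_int k * of_int b"
    using arg_cong[OF k, of "of_int :: int \<Rightarrow> 'k"] by (simp add: mult.commute)
  then have "(of_int a / of_int b :: 'k) = of_int k / of_int p"
    using assms(2) \<open>p \<noteq> 0\<close> by (simp add: frac_eq_eq)
  then show ?thesis using Z2_divide_odd[OF assms(1) Z2_of_int] by simp
qed

lemma vclose_sym: "vclose v n x y \<Longrightarrow> vclose v n y x"
  unfolding vclose_def using v_diff_commute by metis

lemma vclose_trans:
  assumes "vclose v n x y" "vclose v n y z"
  shows "vclose v n x z"
proof (cases "x = y \<or> y = z \<or> x = z")
  case False
  then have "v ((x - y) + (y - z)) \<ge> min (v (x - y)) (v (y - z))" by (intro v_add) auto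
  then show ?thesis using assms False unfolding vclose_def by auto
qed (use assms in \<open>auto simp: vclose_def\<close>)

lemma vclose_mono: "vclose v n x y \<Longrightarrow> k \<le> n \<Longrightarrow> vclose v k x y"
  unfolding vclose_def by auto

lemma vclose_Z2: "x \<in> Z2 v \<Longrightarrow> vclose v 0 x y \<Longrightarrow> y \<in> Z2 v"
  using Z2_diff[of x "x - y"] by (auto simp: vclose_def Z2_def)

lemma vclose_chain:
  assumes steps: "\<And>n. vclose v (int n) (z (Suc n)) (z n)" and "N \<le> i"
  shows "vclose v (int N) (z i) (z N)"
  using \<open>N \<le> i\<close>
proof (induction rule: dec_induct)
  case (step n)
  have "vclose v (int N) (z (Suc n)) (z n)" using vclose_mono[OF steps] step.hyps(1) by simp
  then show ?case using step.IH vclose_trans by blast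
qed (simp add: vclose_def)

lemma vclose_steps_converge:
  assumes steps: "\<And>n. vclose v (int n) (z (Suc n)) (z n)"
  obtains L where "\<forall>n. \<exists>N. \<forall>i\<ge>N. vclose v n (z i) L"
proof -
  have "\<exists>N. \<forall>i\<ge>N. \<forall>j\<ge>N. vclose v n (z i) (z j)" for n
  proof (intro exI allI impI)
    fix i j assume "nat n \<le> i" "nat n \<le> j"
    then have "vclose v (int (nat n)) (z i) (z j)"
      using vclose_chain[OF steps] vclose_trans vclose_sym by metis
    then show "vclose v n (z i) (z j)" by (rule vclose_mono) simp
  qed
  then show ?thesis using v_complete that by blast
qed

lemma Z2_contraction_fixed_point:
  assumes maps: "\<And>z. z \<in> Z2 v \<Longrightarrow> f z \<in> Z2 v"
    and contracts: "\<And>x y n. x \<in> Z2 v \<Longrightarrow> y \<in> Z2 v \<Longrightarrow> vclose v n x y \<Longrightarrow> vclose v (n + 1) (f x) (f y)"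
  obtains L where "L \<in> Z2 v" "f L = L"
proof -
  define z where "z n = (f ^^ n) 0" for n
  have z_Suc: "z (Suc n) = f (z n)" for n by (simp add: z_def)
  have z_Z2: "z n \<in> Z2 v" for n
    by (induction n) (simp_all add: z_Suc maps, simp add: z_def Z2_def)
  have step: "vclose v (int n) (z (Suc n)) (z n)" for n
  proof (induction n)
    case 0
    show ?case using z_Z2[of 1] by (auto simp: z_def vclose_def Z2_def)
  next
    case (Suc n)
    show ?case using contracts[OF z_Z2 z_Z2 Suc] by (simp add: z_Suc add.commute)
  qed
  obtain L where L: "\<forall>n. \<exists>N. \<forall>i\<ge>N. vclose v n (z i) L"
    using vclose_steps_converge[OF step] by blast
  have L_Z2: "L \<in> Z2 v"
    using L vclose_Z2[OF z_Z2] by blast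
  have close: "vclose v n L (f L)" for n
  proof -
    obtain N where N: "\<forall>i\<ge>N. vclose v n (z i) L" using L by blast
    then have "vclose v n (z (Suc N)) (f L)"
      using contracts[OF z_Z2 L_Z2, of n N] vclose_mono by (simp add: z_Suc)
    moreover have "vclose v n L (z (Suc N))" using N vclose_sym by simp
    ultimately show ?thesis using vclose_trans by blast
  qed
  have "f L = L"
  proof (rule ccontr)
    assume "f L \<noteq> L"
    then show False using close[of "v (L - f L) + 1"] by (simp add: vclose_def)
  qed
  with L_Z2 show ?thesis by (rule that)
qed

lemma Z2_eq_digit_plus_double: "y \<in> Z2 v \<Longrightarrow> \<exists>b y'. (b = 0 \<or> b = 1) \<and> y' \<in> Z2 v \<and> y = b + 2 * y'"
proof -
  assume y: "y \<in> Z2 v"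
  have half: "(y - b) / 2 \<in> Z2 v" if "y = b \<or> v (y - b) \<ge> 1" for b
    using that v_divide[of "y - b" 2] v_two by (cases "y = b") (auto simp: Z2_def)
  have "y = 0 \<or> v (y - 0) \<ge> 1 \<or> y = 1 \<or> v (y - 1) \<ge> 1"
    using y v_residue[of y] by (auto simp: Z2_def vclose_def)
  then obtain b where "b = 0 \<or> b = 1" "y = b \<or> v (y - b) \<ge> 1" by blast
  moreover have "y = b + 2 * ((y - b) / 2)" by (simp add: field_simps)
  ultimately show ?thesis using half by blast
qed

lemma Z2_unit_mod_8:
  assumes "w \<noteq> 0" "v w = 0"
  shows "\<exists>r t. r \<in> {1, 3, 5, 7::int} \<and> t \<in> Z2 v \<and> w = of_int r + 8 * t"
proof -
  have w: "w \<in> Z2 v" using assms by (simp add: Z2_def)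
  obtain b0 y1 where 0: "b0 = 0 \<or> b0 = 1" "y1 \<in> Z2 v" "w = b0 + 2 * y1"
    using Z2_eq_digit_plus_double[OF w] by blast
  obtain b1 y2 where 1: "b1 = 0 \<or> b1 = 1" "y2 \<in> Z2 v" "y1 = b1 + 2 * y2"
    using Z2_eq_digit_plus_double[OF 0(2)] by blast
  obtain b2 t where 2: "b2 = 0 \<or> b2 = 1" "t \<in> Z2 v" "y2 = b2 + 2 * t"
    using Z2_eq_digit_plus_double[OF 1(2)] by blast
  have "b0 = 1"
  proof (rule ccontr)
    assume "b0 \<noteq> 1"
    then have "w = 2 * y1" using 0 by simp
    then have "y1 \<noteq> 0" "v w = 1 + v y1" using assms v_mult[of 2 y1] v_two by auto
    then show False using 0(2) assms by (simp add: Z2_def)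
  qed
  then have "w = 1 + 2 * b1 + 4 * b2 + 8 * t" using 0 1 2 by (simp add: algebra_simps)
  then show ?thesis using 1(1) 2(1,2)
    by (intro exI[of _ "1 + 2 * (if b1 = 0 then 0 else 1) + 4 * (if b2 = 0 then 0 else 1)"] exI[of _ t]) auto
qed

lemma one_plus_8_Z2_is_square:
  assumes t: "t \<in> Z2 v"
  obtains y where "y \<noteq> 0" "y^2 = 1 + 8 * t"
proof -
  have maps: "t - 2 * z^2 \<in> Z2 v" if "z \<in> Z2 v" for z
    using that t by (simp add: power2_eq_square Z2_diff Z2_mult Z2_of_int[of 2, simplified])
  \<comment> \<open>A fixed point \<open>L = t - 2L\<^sup>2\<close> gives \<open>(1 + 4L)\<^sup>2 = 1 + 8t\<close>; the map contracts because
    \<open>x\<^sup>2 - y\<^sup>2 = (x - y)(x + y)\<close> with \<open>x + y \<in> \<int>\<^sub>2\<close>.\<close>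
  have contracts: "vclose v (n + 1) (t - 2 * x^2) (t - 2 * y^2)"
    if x: "x \<in> Z2 v" and y: "y \<in> Z2 v" and xy: "vclose v n x y" for x y n
  proof (cases "x - y = 0 \<or> x + y = 0")
    case True
    then have "x^2 = y^2" by (auto simp: add_eq_0_iff)
    then show ?thesis by (simp add: vclose_def)
  next
    case False
    have diff: "t - 2 * x^2 - (t - 2 * y^2) = - (2 * ((x - y) * (x + y)))"
      by (simp add: algebra_simps power2_eq_square)
    have "v (t - 2 * x^2 - (t - 2 * y^2)) = 1 + (v (x - y) + v (x + y))"
      unfolding diff v_minus using False v_two by (simp add: v_mult)
    moreover have "v (x - y) \<ge> n" using xy False by (simp add: vclose_def)
    moreover have "v (x + y) \<ge> 0" using Z2_add[OF x y] False by (simp add: Z2_def)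
    ultimately show ?thesis by (simp add: vclose_def)
  qed
  obtain L where L: "L \<in> Z2 v" "t - 2 * L^2 = L"
    using Z2_contraction_fixed_point[of "\<lambda>z. t - 2 * z^2", OF maps contracts] by blast
  then have "(1 + 4 * L)^2 = 1 + 8 * t"
    by (simp add: algebra_simps power2_eq_square)
  moreover have "1 + 4 * L \<noteq> 0"
  proof (cases "L = 0")
    case False
    have "v (4 * L) = 2 + v L" using v_mult[of 4 L] v_two_power[of 2] False by simp
    then have "v 1 < v (4 * L)" using L(1) False v_one by (simp add: Z2_def)
    then show ?thesis using False by (intro v_add_strict(1)) auto
  qed simp
  ultimately show ?thesis using that by blast
qed

lemma unit_square_class:
  assumes "w \<noteq> 0" "v w = 0"
  shows "\<exists>r y. r \<in> {1, 3, 5, 7::int} \<and> y \<noteq> 0 \<and> w = of_int r * y^2"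
proof -
  obtain r t where rt: "r \<in> {1, 3, 5, 7::int}" "t \<in> Z2 v" "w = of_int r + 8 * t"
    using Z2_unit_mod_8[OF assms] by blast
  then have "odd r" "(of_int r :: 'k) \<noteq> 0" by auto
  obtain y where y: "y \<noteq> 0" "y^2 = 1 + 8 * (t / of_int r)"
    using one_plus_8_Z2_is_square Z2_divide_odd[OF \<open>odd r\<close> rt(2)] by blast
  have "w = of_int r * y^2" unfolding y(2) rt(3) using \<open>of_int r \<noteq> 0\<close> by (simp add: field_simps)
  then show ?thesis using rt(1) y(1) by blast
qed

lemma square_class_representative:
  fixes x :: 'k
  assumes "x \<noteq> 0"
  shows "\<exists>c y. c \<in> {1, 2, 3, 5, 6, 7, 10, 14::int} \<and> y \<noteq> 0 \<and> x = of_int c * y^2"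
proof -
  \<comment> \<open>Scale \<open>x\<close> by an even power of 2 into \<open>\<int>\<^sub>2\<close>, then split off the 2-power part of the result.\<close>
  define N where "N = nat (- v x)"
  define x' where "x' = x * 2 ^ (2 * N)"
  have "x' \<noteq> 0" using assms by (simp add: x'_def)
  have "v x' = v x + int (2 * N)" unfolding x'_def using assms by (simp add: v_mult v_two_power)
  then have "v x' \<ge> 0" unfolding N_def by simp
  define k where "k = nat (v x')"
  define w where "w = x' / 2 ^ k"
  have "w \<noteq> 0" using \<open>x' \<noteq> 0\<close> by (simp add: w_def)
  moreover have "v w = 0"
    using \<open>x' \<noteq> 0\<close> \<open>v x' \<ge> 0\<close> by (simp add: w_def k_def v_divide v_two_power)
  ultimately obtain r y where ry: "r \<in> {1, 3, 5, 7::int}" "y \<noteq> 0" "w = of_int r * y^2"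
    using unit_square_class by blast
  define e where "e = k mod 2"
  define j where "j = k div 2"
  have k: "k = e + 2 * j" unfolding e_def j_def by simp
  have "x = x' / 2 ^ (2 * N)" unfolding x'_def by simp
  also have "x' = 2 ^ k * w" unfolding w_def by simp
  also have "(2::'k) ^ k = 2 ^ e * (2 ^ j)^2"
    unfolding k by (simp add: power_add power_mult power2_eq_square mult_ac)
  finally have "x = of_int (2 ^ e * r) * (y * 2 ^ j / 2 ^ N)^2"
    unfolding ry(3) by (simp add: power_mult_distrib power_divide power_mult field_simps)
  moreover have "2 ^ e * r \<in> {1, 2, 3, 5, 6, 7, 10, 14::int}"
    using ry(1) by (cases "e = 0") (auto simp: e_def)
  moreover have "y * 2 ^ j / 2 ^ N \<noteq> 0" using ry(2) by simp
  ultimately show ?thesis by blast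
qed

lemma Z2_times_squares_eq_nonzero:
  "{a * s^2 | a s. a \<in> Z2 v \<and> a \<noteq> 0 \<and> s \<noteq> 0} = {q. q \<noteq> 0}"
proof (intro equalityI subsetI)
  fix q :: 'k
  assume "q \<in> {q. q \<noteq> 0}"
  then obtain c y where "c \<in> {1, 2, 3, 5, 6, 7, 10, 14::int}" "y \<noteq> 0" "q = of_int c * y^2"
    using square_class_representative by blast
  moreover have "(of_int c :: 'k) \<noteq> 0" using calculation(1) by auto
  ultimately show "q \<in> {a * s^2 | a s. a \<in> Z2 v \<and> a \<noteq> 0 \<and> s \<noteq> 0}"
    using Z2_of_int by blast
qed auto

end

definition dot3 :: "'a::comm_ring_1 ^ 3 \<Rightarrow> 'a ^ 3 \<Rightarrow> 'a" where
  "dot3 x y = x$1 * y$1 + x$2 * y$2 + x$3 * y$3"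

definition of_int_vec :: "int ^ 3 \<Rightarrow> 'k::field_char_0 ^ 3" where
  "of_int_vec U = (\<chi> i. of_int (U$i))"

lemma dot3_of_int_vec: "dot3 (of_int_vec U) (of_int_vec U) = (of_int (dot3 U U) :: 'k::field_char_0)"
  by (simp add: dot3_def of_int_vec_def)

lemma even_dot3_self_iff: "even (dot3 U U) \<longleftrightarrow> even (U$1 + U$2 + U$3)"
  by (simp add: dot3_def)

lemma dot3_commute: "dot3 x y = dot3 y x"
  by (simp add: dot3_def mult.commute)

lemma dot3_diff_scale_left: "dot3 (x - a *s u) y = dot3 x y - a * dot3 u y"
  by (simp add: dot3_def algebra_simps)

lemma dot3_diff_scale_right: "dot3 x (y - b *s u) = dot3 x y - b * dot3 x u"
  by (simp add: dot3_def algebra_simps)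

lemma det_identity_minus_rank1:
  "det (\<chi> i j. (if i = j then 1 else 0) - c$i * u$j :: 'a::comm_ring_1 ^ 3 ^ 3) = 1 - dot3 c u"
  unfolding det_3 by (simp add: dot3_def algebra_simps)

lemma Bm_eq_dot3: "Bm m x y = 4 * (of_nat m - 2)^2 * dot3 x y"
  by (simp add: Bm_def sum_3 dot3_def)

lemma Qm_eq_dot3: "Qm m u = 4 * (of_nat m - 2)^2 * dot3 u u"
  by (simp add: Qm_def Bm_eq_dot3)

lemma Qm_nonzero_iff:
  fixes u :: "'k::field_char_0 ^ 3"
  shows "Qm m u \<noteq> 0 \<longleftrightarrow> of_nat m \<noteq> (2::'k) \<and> dot3 u u \<noteq> 0"
  by (simp add: Qm_eq_dot3)

lemma of_nat_neq_2: "m \<ge> 3 \<Longrightarrow> of_nat m \<noteq> (2::'k::field_char_0)"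
  using of_nat_eq_iff[of m 2] by auto

lemma Qm_of_int_vec_nonzero:
  "m \<ge> 3 \<Longrightarrow> \<not> 4 dvd dot3 U U \<Longrightarrow> Qm m (of_int_vec U :: 'k::field_char_0 ^ 3) \<noteq> 0"
  by (auto simp: Qm_nonzero_iff dot3_of_int_vec of_nat_neq_2)

lemma refl_mat_entry:
  fixes u :: "'k::field_char_0 ^ 3"
  assumes "of_nat m \<noteq> (2::'k)"
  shows "refl_mat m u $ i $ j = (if i = j then 1 else 0) - (2 * u$i / dot3 u u) * u$j"
proof -
  have "Bm m (axis j 1) u = 4 * (of_nat m - 2)^2 * u$j"
    unfolding Bm_def axis_def using exhaust_3[of j] by (auto simp: sum_3)
  then show ?thesis
    using assms by (cases "dot3 u u = 0") (simp_all add: refl_mat_def Qm_eq_dot3 field_simps)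
qed

lemma refl_mat_apply:
  fixes u :: "'k::field_char_0 ^ 3"
  assumes "of_nat m \<noteq> (2::'k)"
  shows "refl_mat m u *v x = x - (2 * dot3 x u / dot3 u u) *s u"
proof -
  have row: "(\<Sum>j\<in>UNIV. ((if i = j then 1 else 0) - c * u$j) * x$j) = x$i - c * dot3 x u" for i c
    using exhaust_3[of i] by (auto simp: sum_3 dot3_def algebra_simps)
  have "(refl_mat m u *v x) $ i = x$i - (2 * u$i / dot3 u u) * dot3 x u" for i
  proof -
    have "(refl_mat m u *v x) $ i
        = (\<Sum>j\<in>UNIV. ((if i = j then 1 else 0) - (2 * u$i / dot3 u u) * u$j) * x$j)"
      by (simp add: matrix_vector_mult_def refl_mat_entry[OF assms])
    then show ?thesis by (simp only: row)
  qed
  then show ?thesis by (simp add: vec_eq_iff field_simps)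
qed

lemma refl_mat_isometry:
  fixes u :: "'k::field_char_0 ^ 3"
  assumes "Qm m u \<noteq> 0"
  shows "Bm m (refl_mat m u *v x) (refl_mat m u *v y) = Bm m x y"
proof -
  have m: "of_nat m \<noteq> (2::'k)" and u: "dot3 u u \<noteq> 0"
    using assms by (simp_all add: Qm_nonzero_iff)
  define a where "a = 2 * dot3 x u / dot3 u u"
  define b where "b = 2 * dot3 y u / dot3 u u"
  have "dot3 (refl_mat m u *v x) (refl_mat m u *v y)
      = dot3 x y - b * dot3 x u - a * dot3 y u + a * b * dot3 u u"
    unfolding refl_mat_apply[OF m] a_def[symmetric] b_def[symmetric]
    by (simp add: dot3_diff_scale_left dot3_diff_scale_right dot3_commute[of u y] algebra_simps)
  also have "\<dots> = dot3 x y"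
    using u by (simp add: a_def b_def field_simps)
  finally show ?thesis by (simp add: Bm_eq_dot3)
qed

lemma refl_mat_involutive:
  fixes u :: "'k::field_char_0 ^ 3"
  assumes "Qm m u \<noteq> 0"
  shows "refl_mat m u *v (refl_mat m u *v x) = x"
proof -
  have m: "of_nat m \<noteq> (2::'k)" and u: "dot3 u u \<noteq> 0"
    using assms by (simp_all add: Qm_nonzero_iff)
  have "dot3 (x - (2 * dot3 x u / dot3 u u) *s u) u = - dot3 x u"
    using u by (simp add: dot3_diff_scale_left field_simps)
  then show ?thesis unfolding refl_mat_apply[OF m] by (simp add: vec_eq_iff algebra_simps)
qed

lemma refl_mat_det:
  fixes u :: "'k::field_char_0 ^ 3"
  assumes "Qm m u \<noteq> 0"
  shows "det (refl_mat m u) = -1"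
proof -
  have m: "of_nat m \<noteq> (2::'k)" and u: "dot3 u u \<noteq> 0"
    using assms by (simp_all add: Qm_nonzero_iff)
  define c where "c = (\<chi> i. 2 * u$i / dot3 u u)"
  have "refl_mat m u = (\<chi> i j. (if i = j then 1 else 0) - c$i * u$j)"
    by (simp add: vec_eq_iff refl_mat_entry[OF m] c_def)
  moreover have "dot3 c u = 2"
    using u by (simp add: c_def dot3_def add_divide_distrib[symmetric] field_simps)
  ultimately show ?thesis by (simp add: det_identity_minus_rank1)
qed

context Q2_valuation
begin

lemma Z2_dot3: "(\<And>j. a $ j \<in> Z2 v) \<Longrightarrow> (\<And>j. b $ j \<in> Z2 v) \<Longrightarrow> dot3 a b \<in> Z2 v"
  by (simp add: dot3_def Z2_add Z2_mult)

lemma mem_X2_iff: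
  assumes "\<forall>i. odd (d i)"
  shows "x \<in> X2 v m d \<longleftrightarrow> (\<forall>i. (x - nu m) $ i \<in> Z2 v)"
proof
  assume "x \<in> X2 v m d"
  then show "\<forall>i. (x - nu m) $ i \<in> Z2 v" by (auto simp: X2_def Z2_mult Z2_of_nat)
next
  assume h: "\<forall>i. (x - nu m) $ i \<in> Z2 v"
  define a where "a i = (x - nu m) $ i / of_int (int (d i))" for i
  have "a i \<in> Z2 v" for i unfolding a_def using assms h by (intro Z2_divide_odd) auto
  moreover have "x = (\<chi> i. of_nat (d i) * a i) + nu m"
  proof -
    have "(of_nat (d i) :: 'k) \<noteq> 0" for i using assms by (metis even_zero of_nat_eq_0_iff)
    then show ?thesis by (simp add: vec_eq_iff a_def)
  qed
  ultimately show "x \<in> X2 v m d" unfolding X2_def by blast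
qed

lemma refl_mat_maps_X2:
  assumes d: "\<forall>i. odd (d i)" and m: "m \<ge> 3" "odd m" and U: "\<not> 4 dvd dot3 U U"
    and x: "x \<in> X2 v m d"
  shows "refl_mat m (of_int_vec U) *v x \<in> X2 v m d"
proof -
  define S where "S = dot3 U U"
  define s where "s = U$1 + U$2 + U$3"
  define c :: 'k where "c = (4 - of_nat m) / (2 * (of_nat m - 2))"
  define z where "z = x - nu m"
  have S0: "S \<noteq> 0" using U by (auto simp: S_def)
  \<comment> \<open>An odd \<open>p\<close> with which \<open>S\<close> divides the numerators of the reflection; for even \<open>S\<close> the
    coordinate sum \<open>s\<close> is even as well.\<close>
  obtain p where p: "odd p" "\<And>a b. S dvd 2 * a * b * p" "\<And>a. S dvd s * a * p"
  proof (cases "odd S")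
    case True
    then show ?thesis by (intro that[of S]) auto
  next
    case False
    then obtain q where "S = 2 * q" by blast
    moreover have "odd q" using U \<open>S = 2 * q\<close> by (auto simp: S_def)
    moreover have "even s" using False even_dot3_self_iff[of U] by (simp add: S_def s_def)
    then obtain k where "s = 2 * k" by blast
    ultimately show ?thesis by (intro that[of q]) (auto simp: mult_ac)
  qed
  have m2: "of_nat m \<noteq> (2::'k)" using of_nat_neq_2 m(1) by blast
  have x_eq: "x $ j = c + z $ j" and nu_eq: "nu m $ j = c" for j
    by (simp_all add: z_def nu_def c_def)
  have z_Z2: "z $ j \<in> Z2 v" for j using x mem_X2_iff[OF d] by (simp add: z_def)
  have frac: "(of_int a / of_int S :: 'k) \<in> Z2 v" if "S dvd a * p" for a
    using Z2_of_int_divide[OF p(1) S0 that] .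
  have two_c: "2 * c \<in> Z2 v"
  proof -
    have "odd (int m - 2)" using m(2) by simp
    then have "of_int (4 - int m) / (of_int (int m - 2) :: 'k) \<in> Z2 v"
      by (rule Z2_divide_odd[OF _ Z2_of_int])
    moreover have "2 * c = of_int (4 - int m) / (of_int (int m - 2) :: 'k)"
      using m2 by (simp add: c_def field_simps)
    ultimately show ?thesis by (simp only:)
  qed
  have dot_x: "dot3 x (of_int_vec U) = c * of_int s + dot3 z (of_int_vec U)"
    by (simp add: dot3_def x_eq s_def of_int_vec_def algebra_simps)
  have "(refl_mat m (of_int_vec U) *v x - nu m) $ i \<in> Z2 v" for i
  proof -
    define w :: "'k ^ 3" where "w = (\<chi> j. of_int (2 * U$j * U$i) / of_int S)"
    have dot_w: "dot3 z w = 2 * dot3 z (of_int_vec U) * of_int (U$i) / of_int S"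
      using S0 by (simp add: w_def dot3_def of_int_vec_def field_simps)
    have "(refl_mat m (of_int_vec U) *v x - nu m) $ i
        = z $ i - (2 * dot3 x (of_int_vec U) / of_int S) * of_int (U$i)"
      unfolding refl_mat_apply[OF m2] dot3_of_int_vec S_def[symmetric]
      by (simp add: x_eq nu_eq of_int_vec_def)
    also have "\<dots> = z $ i - 2 * c * (of_int (s * U$i) / of_int S) - dot3 z w"
      using S0 by (simp add: dot_x dot_w field_simps)
    finally have eq: "(refl_mat m (of_int_vec U) *v x - nu m) $ i
        = z $ i - 2 * c * (of_int (s * U$i) / of_int S) - dot3 z w" .
    have s_frac: "(of_int (s * U$i) / of_int S :: 'k) \<in> Z2 v" by (intro frac p(3))
    have w_Z2: "w $ j \<in> Z2 v" for j unfolding w_def vec_lambda_beta by (intro frac p(2))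
    show ?thesis
      unfolding eq using Z2_diff[OF Z2_diff[OF z_Z2 Z2_mult[OF two_c s_frac]] Z2_dot3[OF z_Z2 w_Z2]] .
  qed
  then show ?thesis using mem_X2_iff[OF d] by blast
qed

lemma refl_mat_image_X2:
  assumes d: "\<forall>i. odd (d i)" and m: "m \<ge> 3" "odd m" and U: "\<not> 4 dvd dot3 U U"
  shows "(\<lambda>x. refl_mat m (of_int_vec U) *v x) ` X2 v m d = X2 v m d"
proof
  let ?R = "\<lambda>x. refl_mat m (of_int_vec U :: 'k ^ 3) *v x"
  have into: "?R x \<in> X2 v m d" if "x \<in> X2 v m d" for x
    using refl_mat_maps_X2[OF assms that] .
  then show "?R ` X2 v m d \<subseteq> X2 v m d" by blast
  have "Qm m (of_int_vec U :: 'k ^ 3) \<noteq> 0" using Qm_of_int_vec_nonzero m(1) U by blast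
  then have "x = ?R (?R x)" for x by (simp add: refl_mat_involutive)
  then show "X2 v m d \<subseteq> ?R ` X2 v m d" using into by (metis image_eqI subsetI)
qed

lemma refl_pair_in_Oplus_X:
  assumes d: "\<forall>i. odd (d i)" and m: "m \<ge> 3" "odd m"
    and U: "\<not> 4 dvd dot3 U U" and W: "\<not> 4 dvd dot3 W W"
  shows "refl_mat m (of_int_vec U) ** refl_mat m (of_int_vec W) \<in> Oplus_X v m d"
proof -
  have QU: "Qm m (of_int_vec U :: 'k ^ 3) \<noteq> 0" and QW: "Qm m (of_int_vec W :: 'k ^ 3) \<noteq> 0"
    using Qm_of_int_vec_nonzero m(1) U W by blast+
  have "refl_mat m (of_int_vec U) ** refl_mat m (of_int_vec W) \<in> (Oplus m :: ('k ^ 3 ^ 3) set)"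
    unfolding Oplus_def
    by (simp add: matrix_vector_mul_assoc[symmetric] refl_mat_isometry[OF QU] refl_mat_isometry[OF QW]
        det_mul refl_mat_det[OF QU] refl_mat_det[OF QW])
  moreover have "(\<lambda>x. (refl_mat m (of_int_vec U) ** refl_mat m (of_int_vec W)) *v x) ` X2 v m d
      = X2 v m d"
    using refl_mat_image_X2[OF d m U] refl_mat_image_X2[OF d m W]
    by (simp add: matrix_vector_mul_assoc[symmetric] image_image[symmetric])
  ultimately show ?thesis unfolding Oplus_X_def by blast
qed

lemma refl_pair_spinor_norm:
  assumes d: "\<forall>i. odd (d i)" and m: "m \<ge> 3" "odd m"
    and U: "\<not> 4 dvd dot3 U U" and W: "\<not> 4 dvd dot3 W W" and "y \<noteq> 0"
  shows "of_int (dot3 U U * dot3 W W) * y^2 \<in> spinor_norm_preimage m (Oplus_X v m d)"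
proof -
  define K :: 'k where "K = 4 * (of_nat m - 2)^2"
  have "K \<noteq> 0" using of_nat_neq_2[OF m(1)] by (simp add: K_def)
  have "Qm m (of_int_vec U) = K * of_int (dot3 U U)" "Qm m (of_int_vec W) = K * of_int (dot3 W W)"
    by (simp_all add: Qm_eq_dot3 dot3_of_int_vec K_def)
  \<comment> \<open>The common factor \<open>K\<^sup>2\<close> of the two reflection norms is absorbed into the square.\<close>
  then have "of_int (dot3 U U * dot3 W W) * y^2
      = (\<Prod>u\<leftarrow>[of_int_vec U, of_int_vec W]. Qm m u) * (y / K)^2"
    using \<open>K \<noteq> 0\<close> by (simp add: field_simps power2_eq_square)
  moreover have "refl_mat m (of_int_vec U) ** refl_mat m (of_int_vec W)
      = foldr (\<lambda>u M. refl_mat m u ** M) [of_int_vec U, of_int_vec W] (mat 1)"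
    by simp
  moreover have "\<forall>u\<in>set [of_int_vec U, of_int_vec W]. Qm m u \<noteq> (0::'k)"
    using Qm_of_int_vec_nonzero m(1) U W by auto
  moreover have "y / K \<noteq> 0" using \<open>y \<noteq> 0\<close> \<open>K \<noteq> 0\<close> by simp
  ultimately show ?thesis
    unfolding spinor_norm_preimage_def mem_Collect_eq
    by (intro bexI[OF _ refl_pair_in_Oplus_X[OF d m U W]] exI[of _ "[of_int_vec U, of_int_vec W]"]
        exI[of _ "y / K"] conjI)
qed

end

lemma spinor_norm_preimage_nonzero:
  "q \<in> spinor_norm_preimage m S \<Longrightarrow> q \<noteq> (0::'k::field_char_0)"
  unfolding spinor_norm_preimage_def by (auto simp: prod_list_zero_iff)

lemma square_class_norm_product:
  assumes "c \<in> {1, 2, 3, 5, 6, 7, 10, 14::int}"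
  shows "\<exists>U W k. \<not> 4 dvd dot3 U U \<and> \<not> 4 dvd dot3 W W \<and> k \<noteq> 0 \<and> dot3 U U * dot3 W W = c * k^2"
proof -
  have witness: "\<exists>U W k. \<not> 4 dvd dot3 U U \<and> \<not> 4 dvd dot3 W W \<and> k \<noteq> 0 \<and> dot3 U U * dot3 W W = c * k^2"
    if "\<not> 4 dvd a1 * a1 + a2 * a2 + a3 * a3" "\<not> 4 dvd b1 * b1 + b2 * b2 + b3 * b3" "k \<noteq> 0"
      "(a1 * a1 + a2 * a2 + a3 * a3) * (b1 * b1 + b2 * b2 + b3 * b3) = c * k^2"
    for a1 a2 a3 b1 b2 b3 k
  proof -
    have "dot3 (vector [a1, a2, a3]) (vector [a1, a2, a3]) = a1 * a1 + a2 * a2 + a3 * a3"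
      "dot3 (vector [b1, b2, b3]) (vector [b1, b2, b3]) = b1 * b1 + b2 * b2 + b3 * b3"
      by (simp_all add: dot3_def)
    with that show ?thesis by metis
  qed
  from assms consider "c = 1" | "c = 2" | "c = 3" | "c = 5" | "c = 6" | "c = 7" | "c = 10" | "c = 14"
    by auto
  then show ?thesis
  proof cases
    case 1 show ?thesis by (rule witness[of 1 0 0 1 0 0 1]) (simp_all add: 1)
  next
    case 2 show ?thesis by (rule witness[of 1 1 0 1 0 0 1]) (simp_all add: 2)
  next
    case 3 show ?thesis by (rule witness[of 1 1 1 1 0 0 1]) (simp_all add: 3)
  next
    case 4 show ?thesis by (rule witness[of 1 2 0 1 0 0 1]) (simp_all add: 4)
  next
    case 5 show ?thesis by (rule witness[of 1 1 2 1 0 0 1]) (simp_all add: 5)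
  next
    case 6 show ?thesis by (rule witness[of 4 2 1 1 1 1 3]) (simp_all add: 6)
  next
    case 7 show ?thesis by (rule witness[of 1 3 0 1 0 0 1]) (simp_all add: 7)
  next
    case 8 show ?thesis by (rule witness[of 1 2 3 1 0 0 1]) (simp_all add: 8)
  qed
qed

theorem proposition4p2:
  fixes v :: "'k::field_char_0 \<Rightarrow> int" and m :: nat and d :: "3 \<Rightarrow> nat"
  assumes "Q2_model v"
    and "m \<ge> 3" and "odd m"
    and "\<forall>i. squarefree_odd (d i)"
  shows "spinor_norm_preimage m (Oplus_X v m d) = {a * s^2 | a s. a \<in> Z2 v \<and> a \<noteq> 0 \<and> s \<noteq> 0}"
proof -
  interpret Q2_valuation v by (rule Q2_valuation.intro) fact
  have d: "\<forall>i. odd (d i)" using assms(4) by (simp add: squarefree_odd_def)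
  have "q \<in> spinor_norm_preimage m (Oplus_X v m d)" if "q \<noteq> 0" for q
  proof -
    obtain c y where "c \<in> {1, 2, 3, 5, 6, 7, 10, 14::int}" "y \<noteq> 0" "q = of_int c * y^2"
      using square_class_representative[OF \<open>q \<noteq> 0\<close>] by blast
    moreover obtain U W k where UW: "\<not> 4 dvd dot3 U U" "\<not> 4 dvd dot3 W W"
      and "k \<noteq> 0" "dot3 U U * dot3 W W = c * k^2"
      using square_class_norm_product[OF calculation(1)] by blast
    ultimately have "q = of_int (dot3 U U * dot3 W W) * (y / of_int k)^2" "y / of_int k \<noteq> 0"
      by (simp_all add: power_divide)
    then show ?thesis using refl_pair_spinor_norm[OF d assms(2,3) UW] by simp
  qed
  then show ?thesis
    unfolding Z2_times_squares_eq_nonzero using spinor_norm_preimage_nonzero by blast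
qed

end
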